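(* Let $G$ be an outer-string graph with an outer-string representation $\varphi$, and let $v_i,v_j$ be vertices whose strings intersect. Suppose cops occupy $v_i$ and $v_j$ and the robber occupies a vertex whose string is entirely contained in the bottom region of the pair $(\varphi(v_i),\varphi(v_j))$. Then the robber stays on vertices whose strings lie in this bottom region as long as cops stay on $v_i$ and $v_j$.
   Context: An outer-string representation of $G$ assigns to each vertex a bounded curve (string) in the closed upper half-plane meeting the $x$-axis in exactly one point, an endpoint of the string, with distinct vertices adjacent iff their strings intersect. A pair of intersecting strings divides the upper half-plane into regions: the unbounded top region, the bottom region incident with an interval of the $x$-axis, and possibly middle regions. Game of cops and robber: alternate moves, each piece stays or moves to an adjacent vertex; capture when a cop occupies the robber's vertex (a robber moving to a neighbor of a cop's vertex is captured in the next cop move). *)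

theory Defs
  imports "HOL-Analysis.Analysis"
begin

definition upper_half :: "complex set" where
  "upper_half = {z. Im z \<ge> 0}"

definition is_string :: "(real \<Rightarrow> complex) \<Rightarrow> bool" where
  "is_string g \<longleftrightarrow> path g \<and> path_image g \<subseteq> upper_half \<and>
     (\<exists>p. path_image g \<inter> {z. Im z = 0} = {p} \<and> (p = pathstart g \<or> p = pathfinish g))"

definition base_point :: "(real \<Rightarrow> complex) \<Rightarrow> complex" where
  "base_point g = (THE p. p \<in> path_image g \<and> Im p = 0)"

definition outer_string_rep ::
  "'v set \<Rightarrow> ('v \<Rightarrow> 'v \<Rightarrow> bool) \<Rightarrow> ('v \<Rightarrow> real \<Rightarrow> complex) \<Rightarrow> bool" where
  "outer_string_rep V E \<phi> \<longleftrightarrow>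
     (\<forall>u v. E u v \<longrightarrow> u \<in> V \<and> v \<in> V \<and> u \<noteq> v) \<and>
     (\<forall>v\<in>V. is_string (\<phi> v)) \<and>
     (\<forall>u\<in>V. \<forall>v\<in>V. u \<noteq> v \<longrightarrow> (E u v \<longleftrightarrow> path_image (\<phi> u) \<inter> path_image (\<phi> v) \<noteq> {}))"

text \<open>The bottom region of a pair of strings: the region (connected component of the
  closed upper half-plane minus both strings) incident with the interval of the x-axis
  between the two base points; it is represented by the midpoint of that interval.\<close>
definition bottom_region :: "(real \<Rightarrow> complex) \<Rightarrow> (real \<Rightarrow> complex) \<Rightarrow> complex set" where
  "bottom_region g h =
     connected_component_set (upper_half - (path_image g \<union> path_image h))
       ((base_point g + base_point h) / 2)"

end

theory Submission
  imports Defs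
begin

text \<open>The robber's string never meets a cop's string, since otherwise the robber would be
  adjacent to that cop. Each string is connected, and consecutive robber strings intersect,
  so each new string lies in the same component of the half-plane minus the two cop strings
  as the previous one, namely the bottom region.\<close>

lemma connected_subset_component_if_meets:
  assumes "connected S" "S \<subseteq> T" "x \<in> S" "x \<in> connected_component_set T c"
  shows "S \<subseteq> connected_component_set T c"
proof -
  have "S \<subseteq> connected_component_set T x"
    using assms(1-3) by (rule connected_component_maximal[rotated])
  also have "connected_component_set T x = connected_component_set T c"
    using assms(4) by (simp add: connected_component_eq)
  finally show ?thesis .
qed

lemma string_subset_bottom_region_if_meets:
  assumes "is_string s"
    and "path_image s \<inter> path_image g = {}" "path_image s \<inter> path_image h = {}"
    and "x \<in> path_image s" "x \<in> bottom_region g h"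
  shows "path_image s \<subseteq> bottom_region g h"
proof -
  have "path s" "path_image s \<subseteq> upper_half"
    using assms(1) unfolding is_string_def by auto
  then show ?thesis
    using assms(2-5) unfolding bottom_region_def
    by (intro connected_subset_component_if_meets) (auto simp: connected_path_image)
qed

lemma outer_string_rep_edge:
  assumes "outer_string_rep V E \<phi>" "E u v"
  shows "u \<in> V" "v \<in> V" "u \<noteq> v"
    and "path_image (\<phi> u) \<inter> path_image (\<phi> v) \<noteq> {}"
  using assms unfolding outer_string_rep_def by blast+

lemma outer_string_rep_non_edge:
  assumes "outer_string_rep V E \<phi>" "u \<in> V" "v \<in> V" "u \<noteq> v" "\<not> E u v"
  shows "path_image (\<phi> u) \<inter> path_image (\<phi> v) = {}"
  using assms unfolding outer_string_rep_def by blast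

lemma bottom_region_move:
  assumes rep: "outer_string_rep V E \<phi>"
    and a: "a \<in> V" and b: "b \<in> V" and move: "E u w"
    and u_bottom: "path_image (\<phi> u) \<subseteq> bottom_region (\<phi> a) (\<phi> b)"
    and safe: "w \<noteq> a" "w \<noteq> b" "\<not> E w a" "\<not> E w b"
  shows "path_image (\<phi> w) \<subseteq> bottom_region (\<phi> a) (\<phi> b)"
proof -
  have w: "w \<in> V" using outer_string_rep_edge(2)[OF rep move] .
  obtain x where "x \<in> path_image (\<phi> u)" "x \<in> path_image (\<phi> w)"
    using outer_string_rep_edge(4)[OF rep move] by blast
  moreover have "is_string (\<phi> w)"
    using rep w unfolding outer_string_rep_def by blast
  ultimately show ?thesis
    using string_subset_bottom_region_if_meets u_bottom
      outer_string_rep_non_edge[OF rep w a safe(1,3)]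
      outer_string_rep_non_edge[OF rep w b safe(2,4)]
    by blast
qed

theorem lemma3:
  fixes V :: "'v set" and E :: "'v \<Rightarrow> 'v \<Rightarrow> bool" and \<phi> :: "'v \<Rightarrow> real \<Rightarrow> complex"
    and vi vj :: 'v and r :: "nat \<Rightarrow> 'v" and n :: nat
  assumes rep: "outer_string_rep V E \<phi>"
    and vi: "vi \<in> V" and vj: "vj \<in> V" and adj: "E vi vj"
    and start_V: "r 0 \<in> V"
    and start: "path_image (\<phi> (r 0)) \<subseteq> bottom_region (\<phi> vi) (\<phi> vj)"
    and moves: "\<forall>k<n. r (Suc k) = r k \<or> E (r k) (r (Suc k))"
    and not_caught: "\<forall>k\<le>n. r k \<noteq> vi \<and> r k \<noteq> vj \<and> \<not> E (r k) vi \<and> \<not> E (r k) vj"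
  shows "\<forall>k\<le>n. path_image (\<phi> (r k)) \<subseteq> bottom_region (\<phi> vi) (\<phi> vj)"
proof (intro allI impI)
  fix k assume "k \<le> n"
  then show "path_image (\<phi> (r k)) \<subseteq> bottom_region (\<phi> vi) (\<phi> vj)"
  proof (induction k)
    case 0
    show ?case using start .
  next
    case (Suc k)
    then have IH: "path_image (\<phi> (r k)) \<subseteq> bottom_region (\<phi> vi) (\<phi> vj)" by simp
    have "r (Suc k) = r k \<or> E (r k) (r (Suc k))"
      using moves Suc.prems by simp
    then show ?case
    proof
      assume "E (r k) (r (Suc k))"
      then show ?case
        using bottom_region_move[OF rep vi vj _ IH] not_caught Suc.prems by blast
    qed (use IH in simp)
  qed
qed

end
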